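(* For all integers $n$ and $d$ with $3\leq d<\left\lceil\frac{n}{2}\right\rceil$, $$t(n,d)\leq n-2+\left\lceil\frac{n}{d-1}\right\rceil.$$
   Context: All graphs are finite, simple and undirected. In an edge-colored graph (adjacent edges may receive the same color), a path is a rainbow path if no two of its edges have the same color. A graph $G$ is $d$-rainbow connected if there is an edge-coloring of $G$ using $d$ colors such that every two distinct vertices of $G$ are joined by a rainbow path. For positive integers $n$ and $d$, $t(n,d)$ denotes the minimum number of edges of a $d$-rainbow connected graph on $n$ vertices. *)

theory Defs
  imports Complex_Main
begin

definition simple_graph :: "'a set \<Rightarrow> 'a set set \<Rightarrow> bool" where
  "simple_graph V E \<longleftrightarrow> finite V \<and> (\<forall>e\<in>E. e \<subseteq> V \<and> card e = 2)"

definition is_path :: "'a set set \<Rightarrow> 'a list \<Rightarrow> 'a \<Rightarrow> 'a \<Rightarrow> bool" where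
  "is_path E p u v \<longleftrightarrow> p \<noteq> [] \<and> hd p = u \<and> last p = v \<and> distinct p \<and>
     (\<forall>i. Suc i < length p \<longrightarrow> {p ! i, p ! Suc i} \<in> E)"

definition path_edges :: "'a list \<Rightarrow> 'a set list" where
  "path_edges p = map (\<lambda>i. {p ! i, p ! Suc i}) [0..<length p - 1]"

definition rainbow_path :: "'a set set \<Rightarrow> ('a set \<Rightarrow> 'c) \<Rightarrow> 'a list \<Rightarrow> 'a \<Rightarrow> 'a \<Rightarrow> bool" where
  "rainbow_path E c p u v \<longleftrightarrow> is_path E p u v \<and> distinct (map c (path_edges p))"

definition rainbow_connected :: "nat \<Rightarrow> 'a set \<Rightarrow> 'a set set \<Rightarrow> bool" where
  "rainbow_connected d V E \<longleftrightarrow>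
     (\<exists>c :: 'a set \<Rightarrow> nat. (\<forall>e\<in>E. c e < d) \<and>
        (\<forall>u\<in>V. \<forall>v\<in>V. u \<noteq> v \<longrightarrow> (\<exists>p. rainbow_path E c p u v)))"

(* t(n,d): minimum number of edges of a d-rainbow connected graph on n vertices
   (vertex set taken to be {0..<n}, which is no loss of generality). *)
definition t :: "nat \<Rightarrow> nat \<Rightarrow> nat" where
  "t n d = (LEAST m. \<exists>E. simple_graph {0..<n} E \<and> rainbow_connected d {0..<n} E \<and> card E = m)"

end

theory Submission
  imports Defs
begin

text \<open>
  Write \<open>n = r (d - 1) + s + 1\<close> with \<open>s < d - 1\<close>. Take \<open>r\<close> cycles of length \<open>d\<close> through a
  common hub and attach \<open>s\<close> pendant leaves to the hub, giving \<open>r d + s = n - 1 + r\<close> edges, and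
  \<open>r < n / (d - 1)\<close>. Colour the edges of every cycle \<open>0, 1, \<dots>, d - 1\<close> in order, starting at
  the hub, and the edge to the \<open>j\<close>-th leaf with \<open>j\<close>. The vertex at position \<open>i\<close> of a
  cycle then reaches the hub by a rainbow path with colours in \<open>{0..i}\<close> and by one with colours
  in \<open>{i+1..d-1}\<close>; two vertices on different branches can always pick hub paths with disjoint
  colour sets, and two vertices on one cycle are joined along it.
\<close>

lemma path_edges_Nil [simp]: "path_edges [] = []"
  and path_edges_singleton [simp]: "path_edges [x] = []"
  by (simp_all add: path_edges_def)

lemma path_edges_Cons_Cons [simp]: "path_edges (x # y # xs) = {x, y} # path_edges (y # xs)"
  by (simp add: path_edges_def upt_conv_Cons map_Suc_upt[symmetric] del: upt_Suc)

lemma length_path_edges [simp]: "length (path_edges p) = length p - 1"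
  by (simp add: path_edges_def)

lemma nth_path_edges: "i < length p - 1 \<Longrightarrow> path_edges p ! i = {p ! i, p ! Suc i}"
  by (simp add: path_edges_def)

lemma set_path_edges: "set (path_edges p) = {{p ! i, p ! Suc i} | i. Suc i < length p}"
  by (auto simp: path_edges_def)

lemma path_edges_append_tl:
  "xs \<noteq> [] \<Longrightarrow> ys \<noteq> [] \<Longrightarrow> last xs = hd ys \<Longrightarrow>
    path_edges (xs @ tl ys) = path_edges xs @ path_edges ys"
  by (induction xs rule: induct_list012) (auto simp: neq_Nil_conv)

lemma path_edges_rev: "path_edges (rev p) = rev (path_edges p)"
proof (induction p rule: induct_list012)
  case (3 x y zs)
  have "path_edges (rev (x # y # zs)) = path_edges (rev (y # zs) @ tl [y, x])"
    by simp
  also have "\<dots> = path_edges (rev (y # zs)) @ [{y, x}]"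
    by (subst path_edges_append_tl) (simp_all add: hd_rev)
  finally show ?case using 3 by (simp add: insert_commute)
qed simp_all

lemma path_edges_take: "path_edges (take k p) = take (k - 1) (path_edges p)"
  by (rule nth_equalityI) (auto simp: nth_path_edges)

lemma path_edges_drop: "path_edges (drop k p) = drop k (path_edges p)"
  by (rule nth_equalityI) (auto simp: nth_path_edges add.commute)

lemma edge_of_distinct_path:
  assumes "distinct p" "e \<in> set (path_edges p)"
  shows "e \<subseteq> set p" "card e = 2"
proof -
  obtain i where i: "Suc i < length p" "e = {p ! i, p ! Suc i}"
    using assms(2) by (auto simp: set_path_edges)
  then show "e \<subseteq> set p" by auto
  have "p ! i \<noteq> p ! Suc i" using assms(1) i(1) by (simp add: nth_eq_iff_index_eq)
  then show "card e = 2" using i(2) by simp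
qed

lemma rainbow_path_iff:
  "rainbow_path E c p u v \<longleftrightarrow> p \<noteq> [] \<and> hd p = u \<and> last p = v \<and> distinct p
     \<and> set (path_edges p) \<subseteq> E \<and> distinct (map c (path_edges p))"
  by (auto simp: rainbow_path_def is_path_def set_path_edges)

lemma rainbow_path_rev:
  assumes "rainbow_path E c p u v"
  shows "rainbow_path E c (rev p) v u"
  using assms by (simp add: rainbow_path_iff path_edges_rev hd_rev last_rev rev_map[symmetric])

lemma rainbow_path_join:
  assumes p: "rainbow_path E c p u w" and q: "rainbow_path E c q w v"
    and vertices: "set p \<inter> set q \<subseteq> {w}"
    and colours: "c ` set (path_edges p) \<inter> c ` set (path_edges q) = {}"
  shows "rainbow_path E c (p @ tl q) u v"
proof -
  obtain p' where p': "p = p' @ [w]"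
    using p unfolding rainbow_path_iff by (metis append_butlast_last_id)
  obtain q' where q': "q = w # q'"
    using q unfolding rainbow_path_iff by (metis list.collapse)
  have "w \<notin> set p'" "w \<notin> set q'"
    using p q by (simp_all add: rainbow_path_iff p' q')
  then have "set p' \<inter> set q' = {}"
    using vertices by (auto simp: p' q')
  moreover have "path_edges (p @ tl q) = path_edges p @ path_edges q"
    by (rule path_edges_append_tl) (simp_all add: p' q')
  ultimately show ?thesis
    using p q colours unfolding rainbow_path_iff by (auto simp: p' q' hd_append)
qed

lemma rainbow_path_via:
  assumes "rainbow_path E c p u w" and "rainbow_path E c q v w"
    and "set p \<inter> set q \<subseteq> {w}"
    and "c ` set (path_edges p) \<inter> c ` set (path_edges q) = {}"
  shows "rainbow_path E c (p @ tl (rev q)) u v"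
  using assms by (intro rainbow_path_join rainbow_path_rev) (simp_all add: path_edges_rev)

lemma path_edges_slice: "path_edges (drop a (take b w)) = drop a (take (b - 1) (path_edges w))"
  by (simp add: path_edges_drop path_edges_take)

lemma rainbow_path_slice:
  assumes "set (path_edges w) \<subseteq> E" "distinct (map c (path_edges w))"
    and "distinct (drop a (take b w))" "a < b" "b \<le> length w"
  shows "rainbow_path E c (drop a (take b w)) (w ! a) (w ! (b - 1))"
proof -
  have "set (path_edges (drop a (take b w))) \<subseteq> set (path_edges w)"
    unfolding path_edges_slice by (meson in_set_dropD in_set_takeD subsetI)
  moreover have "distinct (map c (path_edges (drop a (take b w))))"
    using assms(2) by (simp add: path_edges_slice drop_map[symmetric] take_map[symmetric])
  ultimately show ?thesis
    using assms by (auto simp: rainbow_path_iff hd_drop_conv_nth last_conv_nth)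
qed

text \<open>Vertex \<open>0\<close> is the hub, \<open>blade c i\<close> (\<open>c < r\<close>, \<open>i < D\<close>) is the \<open>i\<close>-th vertex of the
  \<open>c\<close>-th cycle through the hub, and \<open>leaf j\<close> (\<open>j < s\<close>) is a pendant vertex at the hub.\<close>

locale windmill =
  fixes D r s :: nat
  assumes two_le_D: "2 \<le> D" and s_less_D: "s < D"
begin

definition blade :: "nat \<Rightarrow> nat \<Rightarrow> nat" where
  "blade c i = D * c + i + 1"

definition leaf :: "nat \<Rightarrow> nat" where
  "leaf j = r * D + 1 + j"

definition blade_cycle :: "nat \<Rightarrow> nat list" where
  "blade_cycle c = 0 # map (blade c) [0..<D] @ [0]"

definition edges :: "nat set set" where
  "edges = (\<Union>c<r. set (path_edges (blade_cycle c))) \<union> (\<lambda>j. {0, leaf j}) ` {..<s}"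

text \<open>Counting from the hub, the \<open>k\<close>-th edge of every blade cycle gets colour \<open>k\<close>, and the
  edge to \<open>leaf j\<close> gets colour \<open>j\<close>.\<close>

definition colour :: "nat set \<Rightarrow> nat" where
  "colour e =
    (if 0 \<in> e then
       (if r * D < Max e then Max e - r * D - 1 else if (Max e - 1) mod D = 0 then 0 else D)
     else Suc ((Min e - 1) mod D))"

lemma blade_div_mod:
  assumes "i < D"
  shows "(blade c i - 1) div D = c" "(blade c i - 1) mod D = i"
  using assms by (simp_all add: blade_def)

lemma blade_eq_iff:
  assumes "i < D" "i' < D"
  shows "blade c i = blade c' i' \<longleftrightarrow> c = c' \<and> i = i'"
  using blade_div_mod[OF assms(1), of c] blade_div_mod[OF assms(2), of c'] by metis

lemma blade_neq_0 [simp]: "blade c i \<noteq> 0"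
  and leaf_neq_0 [simp]: "leaf j \<noteq> 0"
  by (simp_all add: blade_def leaf_def)

lemma blade_le: "c < r \<Longrightarrow> i < D \<Longrightarrow> blade c i \<le> r * D"
proof -
  assume "c < r" "i < D"
  then have "D * c + D \<le> D * r" by (metis Suc_leI mult_Suc_right mult_le_mono2 add.commute)
  then show ?thesis using \<open>i < D\<close> by (simp add: blade_def mult.commute)
qed

lemma blade_neq_leaf: "c < r \<Longrightarrow> i < D \<Longrightarrow> blade c i \<noteq> leaf j"
  using blade_le[of c i] by (auto simp: leaf_def)

lemma colour_blade_edge: "Suc i < D \<Longrightarrow> colour {blade c i, blade c (Suc i)} = Suc i"
  using blade_div_mod(2)[of i c] by (simp add: colour_def blade_def)

lemma colour_first_hub_edge: "c < r \<Longrightarrow> colour {0, blade c 0} = 0"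
  using blade_le[of c 0] blade_div_mod(2)[of 0 c] two_le_D by (simp add: colour_def)

lemma colour_last_hub_edge: "c < r \<Longrightarrow> colour {blade c (D - 1), 0} = D"
  using blade_le[of c "D - 1"] blade_div_mod(2)[of "D - 1" c] two_le_D
  by (simp add: colour_def insert_commute)

lemma colour_leaf_edge: "colour {0, leaf j} = j"
  by (simp add: colour_def leaf_def)

lemma length_blade_cycle [simp]: "length (blade_cycle c) = D + 2"
  by (simp add: blade_cycle_def)

lemma blade_cycle_nth_Suc: "i < D \<Longrightarrow> blade_cycle c ! Suc i = blade c i"
  by (simp add: blade_cycle_def nth_append)

lemma blade_cycle_nth_0 [simp]: "blade_cycle c ! 0 = 0"
  and blade_cycle_nth_last [simp]: "blade_cycle c ! Suc D = 0"
  by (simp_all add: blade_cycle_def nth_append)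

lemma set_blade_cycle: "set (blade_cycle c) = insert 0 (blade c ` {..<D})"
  by (auto simp: blade_cycle_def)

lemma blade_cycle_edges: "c < r \<Longrightarrow> set (path_edges (blade_cycle c)) \<subseteq> edges"
  by (auto simp: edges_def)

lemma colours_blade_cycle:
  assumes "c < r"
  shows "map colour (path_edges (blade_cycle c)) = [0..<Suc D]"
proof (rule nth_equalityI)
  fix k assume "k < length (map colour (path_edges (blade_cycle c)))"
  then have k: "k \<le> D" by simp
  have "colour {blade_cycle c ! k, blade_cycle c ! Suc k} = k"
  proof -
    consider "k = 0" | "k = D" | i where "k = Suc i" "Suc i < D"
      using k two_le_D by (metis le_neq_implies_less not0_implies_Suc)
    then show ?thesis
    proof cases
      case 1
      then show ?thesis
        using assms two_le_D by (simp add: blade_cycle_nth_Suc colour_first_hub_edge)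
    next
      case 2
      then have "blade_cycle c ! k = blade c (D - 1)"
        using two_le_D blade_cycle_nth_Suc[of "D - 1" c] by simp
      then show ?thesis
        using 2 colour_last_hub_edge[OF assms] by simp
    next
      case 3
      then show ?thesis
        by (simp add: blade_cycle_nth_Suc colour_blade_edge)
    qed
  qed
  then show "map colour (path_edges (blade_cycle c)) ! k = [0..<Suc D] ! k"
    using k by (simp add: nth_path_edges del: upt_Suc)
qed simp

lemma distinct_blade_cycle_slice:
  assumes "0 < a \<or> b \<le> Suc D"
  shows "distinct (drop a (take b (blade_cycle c)))"
proof -
  have blades: "distinct (map (blade c) [0..<D])"
    by (simp add: distinct_map inj_on_def blade_eq_iff)
  show ?thesis
  proof (cases "b \<le> Suc D")
    case True
    then have "take b (blade_cycle c) = take b (0 # map (blade c) [0..<D])"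
      unfolding blade_cycle_def using take_append[of b "0 # map (blade c) [0..<D]" "[0]"]
      by simp
    moreover have "distinct (0 # map (blade c) [0..<D])"
      using blades by auto
    ultimately show ?thesis by (metis distinct_drop distinct_take)
  next
    case False
    then have "drop a (take b (blade_cycle c)) = drop (a - 1) (map (blade c) [0..<D] @ [0])"
      using assms by (simp add: blade_cycle_def drop_Cons')
    moreover have "distinct (map (blade c) [0..<D] @ [0])"
      using blades by auto
    ultimately show ?thesis by (metis distinct_drop)
  qed
qed

lemma rainbow_blade_slice:
  assumes "c < r" "a < b" "b \<le> D + 2" "0 < a \<or> b \<le> Suc D"
  shows "rainbow_path edges colour (drop a (take b (blade_cycle c)))
           (blade_cycle c ! a) (blade_cycle c ! (b - 1))"
    and "colour ` set (path_edges (drop a (take b (blade_cycle c)))) = {a..<b - 1}"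
proof -
  show "rainbow_path edges colour (drop a (take b (blade_cycle c)))
          (blade_cycle c ! a) (blade_cycle c ! (b - 1))"
    using assms blade_cycle_edges colours_blade_cycle distinct_blade_cycle_slice
    by (intro rainbow_path_slice) simp_all
  have "map colour (path_edges (drop a (take b (blade_cycle c)))) = [a..<b - 1]"
    using assms colours_blade_cycle[OF assms(1)]
    by (simp add: path_edges_slice drop_map[symmetric] take_map[symmetric] del: upt_Suc)
  then show "colour ` set (path_edges (drop a (take b (blade_cycle c)))) = {a..<b - 1}"
    by (metis list.set_map set_upt)
qed

definition hub_route :: "nat \<Rightarrow> nat set \<Rightarrow> nat set \<Rightarrow> bool" where
  "hub_route u X C \<longleftrightarrow>
     (\<exists>p. rainbow_path edges colour p u 0 \<and> set p \<subseteq> insert 0 X \<and> colour ` set (path_edges p) \<subseteq> C)"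

lemma rainbow_path_if_hub_routes:
  assumes "hub_route u X C" "hub_route v Y C'" "X \<inter> Y = {}" "C \<inter> C' = {}"
  shows "\<exists>p. rainbow_path edges colour p u v"
proof -
  obtain p where p: "rainbow_path edges colour p u 0" "set p \<subseteq> insert 0 X"
      "colour ` set (path_edges p) \<subseteq> C"
    using assms(1) unfolding hub_route_def by blast
  obtain q where q: "rainbow_path edges colour q v 0" "set q \<subseteq> insert 0 Y"
      "colour ` set (path_edges q) \<subseteq> C'"
    using assms(2) unfolding hub_route_def by blast
  have "set p \<inter> set q \<subseteq> {0}"
    using p(2) q(2) assms(3) by blast
  moreover have "colour ` set (path_edges p) \<inter> colour ` set (path_edges q) = {}"
    using p(3) q(3) assms(4) by blast
  ultimately show ?thesis
    using rainbow_path_via[OF p(1) q(1)] by blast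
qed

lemma hub_route_hub: "hub_route 0 {} {}"
  unfolding hub_route_def by (rule exI[of _ "[0]"]) (simp add: rainbow_path_iff)

lemma hub_route_leaf:
  assumes "j < s"
  shows "hub_route (leaf j) {leaf j} {j}"
proof -
  have "{leaf j, 0} \<in> edges"
    using assms by (auto simp: edges_def insert_commute)
  then show ?thesis
    unfolding hub_route_def
    by (intro exI[of _ "[leaf j, 0]"]) (simp add: rainbow_path_iff insert_commute colour_leaf_edge)
qed

lemma hub_route_blade_low:
  assumes "c < r" "i < D"
  shows "hub_route (blade c i) (blade c ` {..<D}) {..i}"
proof -
  let ?p = "drop 0 (take (i + 2) (blade_cycle c))"
  have "rainbow_path edges colour (rev ?p) (blade c i) 0"
    using rainbow_path_rev[OF rainbow_blade_slice(1)[of c 0 "i + 2"]] assms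
    by (simp add: blade_cycle_nth_Suc)
  moreover have "set (rev ?p) \<subseteq> insert 0 (blade c ` {..<D})"
    using set_blade_cycle[of c] by (auto dest: in_set_takeD)
  moreover have "colour ` set (path_edges (rev ?p)) \<subseteq> {..i}"
    using rainbow_blade_slice(2)[of c 0 "i + 2"] assms by (auto simp: path_edges_rev)
  ultimately show ?thesis unfolding hub_route_def by blast
qed

lemma hub_route_blade_high:
  assumes "c < r" "i < D"
  shows "hub_route (blade c i) (blade c ` {..<D}) {Suc i..}"
proof -
  let ?p = "drop (Suc i) (take (D + 2) (blade_cycle c))"
  have "rainbow_path edges colour ?p (blade c i) 0"
    using rainbow_blade_slice(1)[of c "Suc i" "D + 2"] assms
    by (simp add: blade_cycle_nth_Suc)
  moreover have "set ?p \<subseteq> insert 0 (blade c ` {..<D})"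
    using set_blade_cycle[of c] by (auto dest: in_set_dropD in_set_takeD)
  moreover have "colour ` set (path_edges ?p) \<subseteq> {Suc i..}"
    using rainbow_blade_slice(2)[of c "Suc i" "D + 2"] assms by auto
  ultimately show ?thesis unfolding hub_route_def by blast
qed

lemma rainbow_path_within_blade:
  assumes "c < r" "i < D" "i' < D" "i \<noteq> i'"
  shows "\<exists>p. rainbow_path edges colour p (blade c i) (blade c i')"
proof -
  have arc: "rainbow_path edges colour (drop (Suc k) (take (k' + 2) (blade_cycle c)))
               (blade c k) (blade c k')" if "k < k'" "k' < D" for k k'
    using rainbow_blade_slice(1)[of c "Suc k" "k' + 2"] assms(1) that
    by (simp add: blade_cycle_nth_Suc)
  consider "i < i'" | "i' < i"
    using assms(4) by linarith
  then show ?thesis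
    using assms arc[of i i'] rainbow_path_rev[OF arc[of i' i]] by cases blast+
qed

lemma windmill_vertex_cases:
  assumes "u < r * D + s + 1"
  obtains "u = 0"
    | c i where "c < r" "i < D" "u = blade c i"
    | j where "j < s" "u = leaf j"
proof -
  consider "u = 0" | "0 < u" "u \<le> r * D" | "r * D < u" by linarith
  then show thesis
  proof cases
    case 2
    have "(u - 1) div D < r"
      using 2 by (simp add: less_mult_imp_div_less)
    moreover have "(u - 1) mod D < D" "u = blade ((u - 1) div D) ((u - 1) mod D)"
      using 2 two_le_D by (simp_all add: blade_def)
    ultimately show thesis using that(2) by blast
  next
    case 3
    then show thesis
      using assms that(3)[of "u - r * D - 1"] by (simp add: leaf_def)
  qed (use that(1) in blast)
qed

lemma hub_route_exists:
  assumes "u < r * D + s + 1"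
  shows "\<exists>X C. hub_route u X C"
  using assms by (cases rule: windmill_vertex_cases)
    (blast intro: hub_route_hub hub_route_blade_low hub_route_leaf)+

lemma rainbow_path_between_blades:
  assumes "c < r" "i < D" "c' < r" "i' < D" "c \<noteq> c'"
  shows "\<exists>p. rainbow_path edges colour p (blade c i) (blade c' i')"
proof -
  have disjoint: "blade c ` {..<D} \<inter> blade c' ` {..<D} = {}"
    using assms(5) by (auto simp: blade_eq_iff)
  show ?thesis
  proof (cases "i \<le> i'")
    case True
    show ?thesis
      by (rule rainbow_path_if_hub_routes[OF hub_route_blade_low hub_route_blade_high disjoint])
        (use assms True in auto)
  next
    case False
    show ?thesis
      by (rule rainbow_path_if_hub_routes[OF hub_route_blade_high hub_route_blade_low disjoint])
        (use assms False in auto)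
  qed
qed

lemma rainbow_path_blade_leaf:
  assumes "c < r" "i < D" "j < s"
  shows "\<exists>p. rainbow_path edges colour p (blade c i) (leaf j)"
proof -
  have disjoint: "blade c ` {..<D} \<inter> {leaf j} = {}"
    using assms(1) blade_neq_leaf by blast
  show ?thesis
  proof (cases "j \<le> i")
    case True
    show ?thesis
      by (rule rainbow_path_if_hub_routes[OF hub_route_blade_high hub_route_leaf disjoint])
        (use assms True in auto)
  next
    case False
    show ?thesis
      by (rule rainbow_path_if_hub_routes[OF hub_route_blade_low hub_route_leaf disjoint])
        (use assms False in auto)
  qed
qed

lemma rainbow_path_between_leaves:
  assumes "j < s" "j' < s" "j \<noteq> j'"
  shows "\<exists>p. rainbow_path edges colour p (leaf j) (leaf j')"
  by (rule rainbow_path_if_hub_routes[OF hub_route_leaf hub_route_leaf])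
    (use assms in \<open>auto simp: leaf_def\<close>)

lemma rainbow_path_exists:
  assumes u: "u < r * D + s + 1" and v: "v < r * D + s + 1" and "u \<noteq> v"
  shows "\<exists>p. rainbow_path edges colour p u v"
proof -
  consider (hub) "u = 0 \<or> v = 0"
    | (blades) c i c' i' where "c < r" "i < D" "c' < r" "i' < D" "u = blade c i" "v = blade c' i'"
    | (blade_leaf) c i j where "c < r" "i < D" "j < s" "u = blade c i" "v = leaf j"
    | (leaf_blade) c i j where "c < r" "i < D" "j < s" "u = leaf j" "v = blade c i"
    | (leaves) j j' where "j < s" "j' < s" "u = leaf j" "v = leaf j'"
    by (cases rule: windmill_vertex_cases[OF u]; cases rule: windmill_vertex_cases[OF v]) blast+
  then show ?thesis
  proof cases
    case hub
    then show ?thesis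
      using hub_route_exists[OF u] hub_route_exists[OF v] hub_route_hub
        rainbow_path_if_hub_routes[OF hub_route_hub] rainbow_path_if_hub_routes[OF _ hub_route_hub]
      by blast
  next
    case blades
    then show ?thesis
      using \<open>u \<noteq> v\<close> rainbow_path_within_blade rainbow_path_between_blades by (cases "c = c'") auto
  next
    case blade_leaf
    then show ?thesis using rainbow_path_blade_leaf by blast
  next
    case leaf_blade
    then obtain p where "rainbow_path edges colour p (blade c i) (leaf j)"
      using rainbow_path_blade_leaf by blast
    from rainbow_path_rev[OF this] show ?thesis
      unfolding leaf_blade by blast
  next
    case leaves
    then show ?thesis using \<open>u \<noteq> v\<close> rainbow_path_between_leaves by blast
  qed
qed

lemma card_edges: "card edges \<le> r * Suc D + s"
proof -
  let ?cycles = "\<Union>c<r. set (path_edges (blade_cycle c))"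
  have "card ?cycles \<le> (\<Sum>c<r. card (set (path_edges (blade_cycle c))))"
    by (rule card_UN_le) simp
  also have "\<dots> \<le> (\<Sum>c<r. Suc D)"
    using card_length[of "path_edges (blade_cycle _)"] by (intro sum_mono) simp
  finally have "card ?cycles \<le> r * Suc D"
    by simp
  moreover have "card ((\<lambda>j. {0, leaf j}) ` {..<s}) \<le> s"
    using card_image_le[of "{..<s}"] by simp
  moreover have "card edges \<le> card ?cycles + card ((\<lambda>j. {0, leaf j}) ` {..<s})"
    unfolding edges_def by (rule card_Un_le)
  ultimately show ?thesis
    by linarith
qed

lemma blade_cycle_edge:
  assumes "e \<in> set (path_edges (blade_cycle c))"
  shows "e \<subseteq> set (blade_cycle c) \<and> card e = 2"
proof -
  let ?tail = "drop 1 (blade_cycle c)"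
  have "path_edges (blade_cycle c) = {0, blade c 0} # path_edges ?tail"
    using two_le_D by (simp add: blade_cycle_def upt_conv_Cons)
  then consider "e = {0, blade c 0}" | "e \<in> set (path_edges ?tail)"
    using assms by auto
  then show ?thesis
  proof cases
    case 1
    then show ?thesis
      using two_le_D by (auto simp: set_blade_cycle)
  next
    case 2
    have "distinct ?tail"
      using distinct_blade_cycle_slice[of 1 "D + 2" c] by simp
    then show ?thesis
      using 2 edge_of_distinct_path set_drop_subset by fastforce
  qed
qed

lemma windmill_simple_graph: "simple_graph {0..<r * D + s + 1} edges"
  unfolding simple_graph_def
proof (intro conjI[OF finite_atLeastLessThan] ballI)
  fix e assume "e \<in> edges"
  then consider c where "c < r" "e \<in> set (path_edges (blade_cycle c))"
    | j where "j < s" "e = {0, leaf j}"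
    unfolding edges_def by blast
  then show "e \<subseteq> {0..<r * D + s + 1} \<and> card e = 2"
  proof cases
    case 1
    then have "set (blade_cycle c) \<subseteq> {0..<r * D + s + 1}"
      using blade_le by (force simp: set_blade_cycle)
    then show ?thesis
      using 1 blade_cycle_edge by blast
  next
    case 2
    then show ?thesis by (simp add: leaf_def)
  qed
qed

lemma colour_less: "e \<in> edges \<Longrightarrow> colour e < Suc D"
  unfolding edges_def
proof (elim UnE UN_E imageE)
  fix c assume "c \<in> {..<r}" "e \<in> set (path_edges (blade_cycle c))"
  then have "colour e \<in> set [0..<Suc D]"
    using colours_blade_cycle[of c] by (metis image_eqI lessThan_iff list.set_map)
  then show "colour e < Suc D" by (simp del: upt_Suc)
next
  fix j assume "j \<in> {..<s}" "e = {0, leaf j}"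
  then show "colour e < Suc D"
    using s_less_D by (simp add: colour_leaf_edge)
qed

lemma windmill_rainbow_connected: "rainbow_connected (Suc D) {0..<r * D + s + 1} edges"
  unfolding rainbow_connected_def
  by (intro exI[of _ colour] conjI ballI impI colour_less rainbow_path_exists) auto

end

lemma t_windmill_bound:
  assumes "2 \<le> D" "s < D"
  shows "t (r * D + s + 1) (Suc D) \<le> r * Suc D + s"
proof -
  interpret windmill D r s
    using assms by unfold_locales
  have "t (r * D + s + 1) (Suc D) \<le> card edges"
    unfolding t_def using windmill_simple_graph windmill_rainbow_connected by (blast intro: Least_le)
  also have "\<dots> \<le> r * Suc D + s"
    by (rule card_edges)
  finally show ?thesis .
qed

theorem proposition3:
  fixes n d :: nat
  assumes "3 \<le> d" and "int d < \<lceil>real n / 2\<rceil>"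
  shows "real (t n d) \<le> real n - 2 + real_of_int \<lceil>real n / real (d - 1)\<rceil>"
proof -
  define D r s where "D = d - 1" and "r = (n - 1) div D" and "s = (n - 1) mod D"
  have "2 \<le> D" "d = Suc D"
    using assms(1) by (simp_all add: D_def)
  \<comment> \<open>The hypothesis \<open>d < \<lceil>n / 2\<rceil>\<close> is only needed to exclude \<open>n = 0\<close>.\<close>
  have "0 < n"
    using assms(2) by (cases n) auto
  then have n: "n = r * D + s + 1" and "s < D"
    using \<open>2 \<le> D\<close> by (simp_all add: r_def s_def)
  have "t n d \<le> r * Suc D + s"
    unfolding n \<open>d = Suc D\<close> using t_windmill_bound[OF \<open>2 \<le> D\<close> \<open>s < D\<close>] .
  then have "real (t n d) \<le> real n - 1 + real r"
    unfolding n by (simp flip: of_nat_add of_nat_mult)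
  moreover have "real r * real D < real n"
    unfolding n by simp
  then have "real r < real n / real D"
    using \<open>2 \<le> D\<close> by (simp add: less_divide_eq)
  then have "int r < \<lceil>real n / real D\<rceil>"
    by (simp add: less_ceiling_iff)
  then have "real r + 1 \<le> real_of_int \<lceil>real n / real D\<rceil>"
    by linarith
  ultimately show ?thesis
    unfolding D_def[symmetric] by linarith
qed

end
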